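(* Let $(a',b',c',d')\in\mathbb{Z}_{\ge0}^4$. There exists a unique $(a,b,c,d)\in\mathbb{Z}_{\ge0}^4$ such that $0\le b\le1$, $0\le c\le q_0-1$, $0\le d\le q_0-1$ and $\lVert(a,b,c,d)\rVert=\lVert(a',b',c',d')\rVert$.
   Context: $n\ge2$ is an integer, $q_0=2^n$, $q=2q_0^2$, and for $(a,b,c,d)\in\mathbb{Z}_{\ge0}^4$ one sets $\lVert(a,b,c,d)\rVert:=aq+b(q+q_0)+c(q+2q_0)+d(q+2q_0+1)$. *)

theory Defs
  imports Main
begin

definition q0 :: "nat \<Rightarrow> nat" where
  "q0 n = 2 ^ n"

definition qq :: "nat \<Rightarrow> nat" where
  "qq n = 2 * (q0 n)^2"

definition wnorm :: "nat \<Rightarrow> nat \<times> nat \<times> nat \<times> nat \<Rightarrow> nat" where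
  "wnorm n t = (case t of (a, b, c, d) \<Rightarrow>
     a * qq n + b * (qq n + q0 n) + c * (qq n + 2 * q0 n) + d * (qq n + 2 * q0 n + 1))"

end

theory Submission
  imports Defs
begin

text \<open>With \<open>Q = q0 n\<close> and \<open>q = 2Q\<^sup>2\<close> the weights satisfy the carry rules
  \<open>Q\<cdot>[d] = Q\<cdot>[a] + [b]\<close>, \<open>2\<cdot>[b] = [a] + [c]\<close> and \<open>Q\<cdot>[c] = (Q+1)\<cdot>[a]\<close>; applying them in this
  order moves any tuple to one with \<open>d < Q\<close>, \<open>b \<le> 1\<close>, \<open>c < Q\<close> without changing its weight.
  Uniqueness comes from reading the weight \<open>d + Q(b + 2c + 2d + 2Q(a+b+c+d))\<close> in mixed radix:
  \<open>d\<close> is its last base-\<open>Q\<close> digit, then \<open>b + 2c\<close> is the next base-\<open>2Q\<close> digit.\<close>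

lemma q0_pos: "q0 n > 0"
  unfolding q0_def by simp

lemma wnorm_mixed_radix:
  "wnorm n (a, b, c, d) = d + q0 n * (b + 2*c + 2*d + 2 * q0 n * (a + b + c + d))"
  unfolding wnorm_def qq_def by (simp add: algebra_simps power2_eq_square)

lemma wnorm_carry_d: "wnorm n (a, b, c, d + q0 n * k) = wnorm n (a + q0 n * k, b + k, c, d)"
  unfolding wnorm_mixed_radix by (simp add: algebra_simps)

lemma wnorm_carry_b: "wnorm n (a, b + 2 * k, c, d) = wnorm n (a + k, b, c + k, d)"
  unfolding wnorm_mixed_radix by (simp add: algebra_simps)

lemma wnorm_carry_c: "wnorm n (a, b, c + q0 n * k, d) = wnorm n (a + (q0 n + 1) * k, b, c, d)"
  unfolding wnorm_mixed_radix by (simp add: algebra_simps)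

lemma wnorm_reduced_exists:
  obtains a b c d where "b \<le> 1" "c < q0 n" "d < q0 n"
    "wnorm n (a, b, c, d) = wnorm n (a', b', c', d')"
proof -
  define Q where "Q = q0 n"
  define d k1 where "d = d' mod Q" and "k1 = d' div Q"
  define b k2 where "b = (b' + k1) mod 2" and "k2 = (b' + k1) div 2"
  define c k3 where "c = (c' + k2) mod Q" and "k3 = (c' + k2) div Q"
  have "wnorm n (a', b', c', d') = wnorm n (a' + Q * k1, b' + k1, c', d)"
    using wnorm_carry_d[where n=n and a=a' and b=b' and c=c' and d=d and k=k1]
    by (simp add: d_def k1_def Q_def)
  also have "\<dots> = wnorm n (a' + Q * k1 + k2, b, c' + k2, d)"
    using wnorm_carry_b[where n=n and a="a' + Q * k1" and b=b and c=c' and d=d and k=k2]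
    by (simp add: b_def k2_def)
  also have "\<dots> = wnorm n (a' + Q * k1 + k2 + (Q + 1) * k3, b, c, d)"
    using wnorm_carry_c[where n=n and a="a' + Q * k1 + k2" and b=b and c=c and d=d and k=k3]
    by (simp add: c_def k3_def Q_def)
  finally have "wnorm n (a' + Q * k1 + k2 + (Q + 1) * k3, b, c, d) = wnorm n (a', b', c', d')"
    by (rule sym)
  moreover have "b \<le> 1" "c < Q" "d < Q"
    using q0_pos[of n] by (simp_all add: b_def c_def d_def Q_def)
  ultimately show thesis
    using that unfolding Q_def by blast
qed

lemma digits_unique:
  fixes B x y x' y' :: nat
  assumes "x < B" "x' < B" "x + B * y = x' + B * y'"
  shows "x = x'" "y = y'"
proof -
  show "x = x'"
    using arg_cong[OF assms(3), of "\<lambda>m. m mod B"] assms(1,2) by simp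
  then show "y = y'"
    using assms by simp
qed

lemma wnorm_reduced_inj:
  assumes "b \<le> 1" "c < q0 n" "d < q0 n" "b' \<le> 1" "c' < q0 n" "d' < q0 n"
    and "wnorm n (a, b, c, d) = wnorm n (a', b', c', d')"
  shows "(a, b, c, d) = (a', b', c', d')"
proof -
  define Q where "Q = q0 n"
  have weight: "d + Q * (b + 2*c + 2*d + 2*Q * (a+b+c+d))
      = d' + Q * (b' + 2*c' + 2*d' + 2*Q * (a'+b'+c'+d'))"
    using assms(7) unfolding wnorm_mixed_radix Q_def .
  have "d = d'"
    using digits_unique(1)[OF _ _ weight] assms(3,6) by (simp add: Q_def)
  moreover from this have "(b + 2*c) + 2*Q * (a+b+c+d) = (b' + 2*c') + 2*Q * (a'+b'+c'+d')"
    using digits_unique(2)[OF _ _ weight] assms(3,6) by (simp add: Q_def algebra_simps)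
  moreover have "b + 2*c < 2*Q" "b' + 2*c' < 2*Q"
    using assms(1,2,4,5) by (simp_all add: Q_def)
  ultimately have "d = d'" "b + 2*c = b' + 2*c'" "a+b+c+d = a'+b'+c'+d'"
    using digits_unique by blast+
  moreover have "b = b'"
    using \<open>b + 2*c = b' + 2*c'\<close> assms(1,4) by presburger
  ultimately show ?thesis by simp
qed

theorem lemma3p6:
  fixes n :: nat and a' b' c' d' :: nat
  assumes "n \<ge> 2"
  shows "\<exists>!(a, b, c, d). b \<le> 1 \<and> c \<le> q0 n - 1 \<and> d \<le> q0 n - 1 \<and>
           wnorm n (a, b, c, d) = wnorm n (a', b', c', d')"
proof -
  have reduced_iff: "x \<le> q0 n - Suc 0 \<longleftrightarrow> x < q0 n" for x
    using q0_pos[of n] by linarith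
  obtain a b c d where red: "b \<le> 1" "c < q0 n" "d < q0 n"
    and same: "wnorm n (a, b, c, d) = wnorm n (a', b', c', d')"
    by (rule wnorm_reduced_exists)
  show ?thesis
  proof (rule ex1I[of _ "(a, b, c, d)"])
    show "case (a, b, c, d) of (a, b, c, d) \<Rightarrow> b \<le> 1 \<and> c \<le> q0 n - 1 \<and> d \<le> q0 n - 1 \<and>
        wnorm n (a, b, c, d) = wnorm n (a', b', c', d')"
      using red same by (simp add: reduced_iff)
  next
    fix t :: "nat \<times> nat \<times> nat \<times> nat"
    assume "case t of (a, b, c, d) \<Rightarrow> b \<le> 1 \<and> c \<le> q0 n - 1 \<and> d \<le> q0 n - 1 \<and>
        wnorm n (a, b, c, d) = wnorm n (a', b', c', d')"
    then obtain x y z w where t: "t = (x, y, z, w)" "y \<le> 1" "z < q0 n" "w < q0 n"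
        "wnorm n (x, y, z, w) = wnorm n (a, b, c, d)"
      using same by (cases t) (auto simp: reduced_iff)
    show "t = (a, b, c, d)"
      unfolding t(1) using wnorm_reduced_inj[OF t(2-4) red t(5)] .
  qed
qed

end
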